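(* Suppose $\tau\in(1,2)$ is the smallest $x\ge1$ such that $\omega'(x)=0$. Then $\tau>1.732$.
   Context: For $x\ge1$ let $\psi_1(x)=\frac32\int_0^{\pi/2}(1-x^{-2}\sin^2u)^{3/2}\,du$ and $\psi_2(x)=\frac32(1-x^{-2})^2\int_0^{\pi/2}\frac{\sin^4v}{\sqrt{1-(1-x^{-2})\sin^2v}}\,dv$, and $\omega(x)=\psi_2'(x)\psi_1(x)-\psi_2(x)\psi_1'(x)$. *)

theory Defs
  imports "HOL-Analysis.Analysis"
begin

definition psi1 :: "real \<Rightarrow> real" where
  "psi1 x = 3/2 * integral {0..pi/2} (\<lambda>u. (1 - sin u ^ 2 / x ^ 2) powr (3/2))"

definition psi2 :: "real \<Rightarrow> real" where
  "psi2 x = 3/2 * (1 - 1 / x ^ 2) ^ 2 *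
     integral {0..pi/2} (\<lambda>v. sin v ^ 4 / sqrt (1 - (1 - 1 / x ^ 2) * sin v ^ 2))"

definition dR :: "(real \<Rightarrow> real) \<Rightarrow> real \<Rightarrow> real" where
  "dR f x = (THE D. (f has_real_derivative D) (at x within {1..}))"

definition omega :: "real \<Rightarrow> real" where
  "omega x = dR psi2 x * psi1 x - psi2 x * dR psi1 x"

end

theory Submission
  imports Defs
begin

text \<open>
  Substituting \<open>a = 1/x\<^sup>2\<close> turns \<open>\<psi>\<^sub>1\<close> and \<open>\<psi>\<^sub>2\<close> into \<open>3/2\<close> times
  \<open>y\<^sub>1 a = \<integral>(1 - a sin\<^sup>2u)\<^bsup>3/2\<^esup> du\<close> and
  \<open>y\<^sub>2 a = (1-a)\<^sup>2 \<integral>sin\<^sup>4u (1 - (1-a) sin\<^sup>2u)\<^bsup>-1/2\<^esup> du\<close>.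
  Differentiating under the integral sign and integrating by parts shows that both solve the
  hypergeometric equation \<open>a(1-a)y'' + y' + 3/4 y = 0\<close>, so by Abel's identity their Wronskian
  is \<open>C (1-a)/a\<close>; \<open>C \<noteq> 0\<close> because \<open>y\<^sub>2\<close> vanishes at \<open>a = 1\<close> while \<open>y\<^sub>1\<close> does not.
  Undoing the substitution, \<open>\<omega>(x) = K (x\<^sup>2 - 1)/x\<^sup>3\<close> with \<open>K \<noteq> 0\<close>, and the only
  critical point of this function in \<open>(1,\<infinity>)\<close> is \<open>\<surd>3 = 1.7320508\<dots>\<close>.
\<close>

lemma has_integral_zero_of_vanishing_primitive:
  fixes g g' :: "real \<Rightarrow> real"
  assumes "a \<le> b" and "\<And>x. x \<in> {a..b} \<Longrightarrow> (g has_real_derivative g' x) (at x)"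
    and "g a = 0" and "g b = 0"
  shows "(g' has_integral 0) {a..b}"
proof -
  have "(g' has_integral g b - g a) {a..b}"
    using assms(1,2)
    by (intro fundamental_theorem_of_calculus)
       (auto simp: has_real_derivative_iff_has_vector_derivative[symmetric]
             intro: has_field_derivative_at_within)
  then show ?thesis using assms(3,4) by simp
qed

lemma hypergeometric_wronskian_const:
  fixes f f' f'' g g' g'' :: "real \<Rightarrow> real" and c :: real
  assumes f: "\<And>a. a \<in> {0<..<1} \<Longrightarrow> (f has_real_derivative f' a) (at a)"
    and f': "\<And>a. a \<in> {0<..<1} \<Longrightarrow> (f' has_real_derivative f'' a) (at a)"
    and g: "\<And>a. a \<in> {0<..<1} \<Longrightarrow> (g has_real_derivative g' a) (at a)"
    and g': "\<And>a. a \<in> {0<..<1} \<Longrightarrow> (g' has_real_derivative g'' a) (at a)"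
    and f_ode: "\<And>a. a \<in> {0<..<1} \<Longrightarrow> a * (1-a) * f'' a + f' a + c * f a = 0"
    and g_ode: "\<And>a. a \<in> {0<..<1} \<Longrightarrow> a * (1-a) * g'' a + g' a + c * g a = 0"
  shows "\<exists>C. \<forall>a\<in>{0<..<1}. a / (1-a) * (f a * g' a - f' a * g a) = C"
proof (rule has_field_derivative_zero_constant)
  fix a :: real assume a: "a \<in> {0<..<1}"
  have "((\<lambda>a. a / (1-a)) has_real_derivative 1 / (1-a)^2) (at a)"
    using a by (auto intro!: derivative_eq_intros simp: field_simps power2_eq_square)
  from DERIV_mult[OF this DERIV_diff[OF DERIV_mult[OF f[OF a] g'[OF a]] DERIV_mult[OF f'[OF a] g[OF a]]]]
  have "((\<lambda>a. a / (1-a) * (f a * g' a - f' a * g a)) has_real_derivative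
          1 / (1-a)^2 * (f a * g' a - f' a * g a)
          + a / (1-a) * (f' a * g' a + f a * g'' a - (f'' a * g a + f' a * g' a))) (at a)"
    by (simp add: algebra_simps)
  moreover have "1 / (1-a)^2 * (f a * g' a - f' a * g a)
          + a / (1-a) * (f' a * g' a + f a * g'' a - (f'' a * g a + f' a * g' a))
        = 1 / (1-a)^2 * ((f a * g' a - f' a * g a) + a * (1-a) * (f a * g'' a - f'' a * g a))"
  proof -
    have "1 / d^2 * W + a / d * X = 1 / d^2 * (W + a * d * X)" if "d \<noteq> 0" for d W X :: real
      using that by (simp add: field_simps power2_eq_square)
    then show ?thesis using a by simp
  qed
  moreover have "(f a * g' a - f' a * g a) + a * (1-a) * (f a * g'' a - f'' a * g a) = 0"
    using f_ode[OF a] g_ode[OF a] by algebra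
  ultimately show "((\<lambda>a. a / (1-a) * (f a * g' a - f' a * g a)) has_field_derivative 0)
                     (at a within {0<..<1})"
    by (auto intro: has_field_derivative_at_within)
qed simp

definition J_integrand :: "nat \<Rightarrow> real \<Rightarrow> real \<Rightarrow> real" where
  "J_integrand k a u = sin u ^ (2*k) * (1 - a * sin u ^ 2) powr (3/2 - real k)"

definition J :: "nat \<Rightarrow> real \<Rightarrow> real" where
  "J k a = integral {0..pi/2} (J_integrand k a)"

lemma sin_sq_le_one: "sin (u::real) ^ 2 \<le> 1"
  using abs_sin_le_one[of u] by (simp add: abs_square_le_1)

lemma one_minus_mult_sin_sq_pos:
  fixes a u :: real
  assumes "a < 1"
  shows "0 < 1 - a * sin u ^ 2"
proof (cases "a \<le> 0")
  case True
  then have "a * sin u ^ 2 \<le> 0" by (simp add: mult_nonpos_nonneg)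
  then show ?thesis by simp
next
  case False
  then have "a * sin u ^ 2 \<le> a" using sin_sq_le_one by (simp add: mult_left_le)
  then show ?thesis using assms by simp
qed

lemma continuous_on_J_integrand:
  assumes "a < 1"
  shows "continuous_on {0..pi/2} (J_integrand k a)"
  unfolding J_integrand_def using one_minus_mult_sin_sq_pos[OF assms]
  by (intro continuous_intros) (auto simp: less_imp_neq[symmetric])

lemma has_integral_J:
  assumes "a < 1"
  shows "(J_integrand k a has_integral J k a) {0..pi/2}"
  unfolding J_def using continuous_on_J_integrand[OF assms]
  by (intro integrable_integral integrable_continuous_interval)

lemma J_pos:
  assumes "a < 1"
  shows "0 < J k a"
proof -
  have "integral {0..pi/2} (\<lambda>u. 0::real) < integral {0..pi/2} (J_integrand k a)"
  proof (rule integral_less_real)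
    fix u assume "u \<in> {0<..<pi/2}"
    then have "0 < sin u" by (intro sin_gt_zero) auto
    then show "0 < J_integrand k a u"
      unfolding J_integrand_def using one_minus_mult_sin_sq_pos[OF assms, of u] by simp
  qed (use continuous_on_J_integrand[OF assms] pi_gt_zero in \<open>auto simp: not_le\<close>)
  then show ?thesis unfolding J_def by simp
qed

lemma J_integrand_sqrt:
  assumes "a < 1"
  shows "J_integrand k a u = sin u ^ (2*k) * sqrt (1 - a * sin u ^ 2) ^ 3 / (1 - a * sin u ^ 2) ^ k"
proof -
  define w where "w = 1 - a * sin u ^ 2"
  have w: "0 < w" unfolding w_def using one_minus_mult_sin_sq_pos[OF assms] .
  have "w powr (3/2 - real k) = (w powr (1/2)) powr real 3 / w powr real k"
    by (simp add: powr_diff powr_powr)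
  also have "\<dots> = sqrt w ^ 3 / w ^ k"
    using w by (simp add: powr_realpow powr_half_sqrt)
  finally show ?thesis unfolding J_integrand_def w_def by simp
qed

lemma has_real_derivative_J:
  assumes "a < 1"
  shows "(J k has_real_derivative -(3/2 - real k) * J (Suc k) a) (at a)"
proof -
  let ?U = "{..<1::real}"
  let ?I = "cbox 0 (pi/2::real)"
  have "((\<lambda>a. integral ?I (J_integrand k a)) has_field_derivative
          integral ?I (\<lambda>u. -(3/2 - real k) * J_integrand (Suc k) a u)) (at a within ?U)"
  proof (rule leibniz_rule_field_derivative)
    fix x t assume x: "x \<in> ?U"
    have w: "0 < 1 - x * sin t ^ 2" using x by (intro one_minus_mult_sin_sq_pos) auto
    have d: "((\<lambda>x. (1 - x * sin t ^ 2) powr (3/2 - real k)) has_real_derivative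
          (3/2 - real k) * (1 - x * sin t ^ 2) powr (3/2 - real k - 1) * -(sin t ^ 2)) (at x)"
    proof (rule DERIV_chain2[where g="\<lambda>x. 1 - x * sin t ^ 2"])
      show "((\<lambda>x. 1 - x * sin t ^ 2) has_real_derivative -(sin t ^ 2)) (at x)"
        by (auto intro!: derivative_eq_intros)
    qed (rule has_real_derivative_powr[OF w])
    have e: "sin t ^ (2*k) * ((3/2 - real k) * (1 - x * sin t ^ 2) powr (3/2 - real k - 1) * -(sin t ^ 2))
        = -(3/2 - real k) * J_integrand (Suc k) x t"
      unfolding J_integrand_def by (simp add: power_add algebra_simps power2_eq_square)
    have "((\<lambda>x. J_integrand k x t) has_real_derivative -(3/2 - real k) * J_integrand (Suc k) x t) (at x)"
      unfolding J_integrand_def[of k] by (rule DERIV_cong[OF DERIV_cmult[OF d] e])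
    then show "((\<lambda>x. J_integrand k x t) has_field_derivative
           -(3/2 - real k) * J_integrand (Suc k) x t) (at x within ?U)"
      by (rule has_field_derivative_at_within)
  next
    show "continuous_on (?U \<times> ?I) (\<lambda>(x, u). -(3/2 - real k) * J_integrand (Suc k) x u)"
      unfolding J_integrand_def using one_minus_mult_sin_sq_pos
      by (auto simp: split_beta intro!: continuous_intros) (metis less_irrefl)
  qed (use assms continuous_on_J_integrand in \<open>auto intro: integrable_continuous_interval\<close>)
  moreover have "at a within ?U = at a" using assms by (intro at_within_open) auto
  ultimately show ?thesis unfolding J_def cbox_interval by simp
qed

lemma has_real_derivative_sin_cos_sqrt:
  assumes "a < 1"
  shows "((\<lambda>u. sin u * cos u * sqrt (1 - a * sin u ^ 2)) has_real_derivative
           a * (1-a) * J_integrand 2 a x - 2 * J_integrand 1 a x + J_integrand 0 a x) (at x)"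
proof -
  define q where "q = sqrt (1 - a * sin x ^ 2)"
  have w: "0 < 1 - a * sin x ^ 2" using assms by (rule one_minus_mult_sin_sq_pos)
  then have q0: "q > 0" and q2: "q ^ 2 = 1 - a * sin x ^ 2" by (simp_all add: q_def)
  have c2: "cos x ^ 2 = 1 - sin x ^ 2" by (simp add: cos_squared_eq)
  have hq: "J_integrand k a x = sin x ^ (2*k) * q ^ 3 / (q ^ 2) ^ k" for k
    using J_integrand_sqrt[OF assms, of k x] q2 by (simp add: q_def)
  have dw: "((\<lambda>x. 1 - a * sin x ^ 2) has_real_derivative - (a * (2 * sin x * cos x))) (at x)"
    by (auto intro!: derivative_eq_intros)
  have dq: "((\<lambda>x. sqrt (1 - a * sin x ^ 2)) has_real_derivative inverse q / 2 * - (a * (2 * sin x * cos x))) (at x)"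
    using DERIV_chain2[OF DERIV_real_sqrt[OF w] dw] by (simp add: q_def)
  have dsc: "((\<lambda>x. sin x * cos x) has_real_derivative cos x * cos x + sin x * - sin x) (at x)"
    by (auto intro!: derivative_eq_intros)
  have "(cos x * cos x + sin x * - sin x) * q
          + sin x * cos x * (inverse q / 2 * - (a * (2 * sin x * cos x)))
        = a * (1-a) * J_integrand 2 a x - 2 * J_integrand 1 a x + J_integrand 0 a x"
    unfolding hq using q0
    apply (simp add: field_simps)
    using q2 c2 by algebra
  with DERIV_mult[OF dsc dq] show ?thesis by (simp add: q_def mult_ac)
qed

lemma has_real_derivative_sin_pow5_cos_div:
  assumes "a < 1"
  shows "((\<lambda>u. sin u ^ 5 * cos u / sqrt (1 - a * sin u ^ 2) ^ 3) has_real_derivative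
           5 * J_integrand 2 a x - 2 * (3 - 4*a) * J_integrand 3 a x - 3 * a * (1-a) * J_integrand 4 a x)
         (at x)"
proof -
  define q where "q = sqrt (1 - a * sin x ^ 2)"
  have w: "0 < 1 - a * sin x ^ 2" using assms by (rule one_minus_mult_sin_sq_pos)
  then have q0: "q > 0" and q2: "q ^ 2 = 1 - a * sin x ^ 2" by (simp_all add: q_def)
  have c2: "cos x ^ 2 = 1 - sin x ^ 2" by (simp add: cos_squared_eq)
  have hq: "J_integrand k a x = sin x ^ (2*k) * q ^ 3 / (q ^ 2) ^ k" for k
    using J_integrand_sqrt[OF assms, of k x] q2 by (simp add: q_def)
  have dw: "((\<lambda>x. 1 - a * sin x ^ 2) has_real_derivative - (a * (2 * sin x * cos x))) (at x)"
    by (auto intro!: derivative_eq_intros)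
  have dq: "((\<lambda>x. sqrt (1 - a * sin x ^ 2)) has_real_derivative inverse q / 2 * - (a * (2 * sin x * cos x))) (at x)"
    using DERIV_chain2[OF DERIV_real_sqrt[OF w] dw] by (simp add: q_def)
  have dq3: "((\<lambda>x. sqrt (1 - a * sin x ^ 2) ^ 3) has_real_derivative
               real 3 * q ^ (3 - 1) * (inverse q / 2 * - (a * (2 * sin x * cos x)))) (at x)"
    using DERIV_chain2[OF DERIV_pow dq, of 3] by (simp add: q_def)
  have ds5: "((\<lambda>x. sin x ^ 5) has_real_derivative real 5 * sin x ^ (5 - 1) * cos x) (at x)"
    using DERIV_chain2[OF DERIV_pow DERIV_sin, of 5 x] by simp
  have dsc: "((\<lambda>x. sin x ^ 5 * cos x) has_real_derivative
               (real 5 * sin x ^ (5 - 1) * cos x) * cos x + sin x ^ 5 * - sin x) (at x)"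
    using DERIV_mult[OF ds5 DERIV_cos] by (simp add: mult_ac)
  have "(((real 5 * sin x ^ (5 - 1) * cos x) * cos x + sin x ^ 5 * - sin x) * q ^ 3
          - sin x ^ 5 * cos x * (real 3 * q ^ (3 - 1) * (inverse q / 2 * - (a * (2 * sin x * cos x)))))
        / (q ^ 3 * q ^ 3)
        = 5 * J_integrand 2 a x - 2 * (3 - 4*a) * J_integrand 3 a x - 3 * a * (1-a) * J_integrand 4 a x"
    unfolding hq using q0
    apply (simp add: field_simps)
    using q2 c2 by algebra
  with DERIV_divide[OF dsc dq3] q0 show ?thesis by (simp add: q_def)
qed

lemma J_recurrence_0:
  assumes "a < 1"
  shows "a * (1-a) * J 2 a - 2 * J 1 a + J 0 a = 0"
proof -
  have "((\<lambda>u. a * (1-a) * J_integrand 2 a u - 2 * J_integrand 1 a u + J_integrand 0 a u)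
          has_integral 0) {0..pi/2}"
    by (rule has_integral_zero_of_vanishing_primitive[where g = "\<lambda>u. sin u * cos u * sqrt (1 - a * sin u ^ 2)"])
       (use has_real_derivative_sin_cos_sqrt[OF assms] in auto)
  moreover have "((\<lambda>u. a * (1-a) * J_integrand 2 a u - 2 * J_integrand 1 a u + J_integrand 0 a u)
                   has_integral a * (1-a) * J 2 a - 2 * J 1 a + J 0 a) {0..pi/2}"
    using assms by (intro has_integral_add has_integral_diff has_integral_mult_right has_integral_J)
  ultimately have "0 = a * (1-a) * J 2 a - 2 * J 1 a + J 0 a" by (rule has_integral_unique)
  then show ?thesis by simp
qed

lemma J_recurrence_2:
  assumes "a < 1"
  shows "3 * a * (1-a) * J 4 a + 2 * (3 - 4*a) * J 3 a - 5 * J 2 a = 0"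
proof -
  have "((\<lambda>u. 5 * J_integrand 2 a u - 2 * (3 - 4*a) * J_integrand 3 a u - 3 * a * (1-a) * J_integrand 4 a u)
          has_integral 0) {0..pi/2}"
    by (rule has_integral_zero_of_vanishing_primitive
          [where g = "\<lambda>u. sin u ^ 5 * cos u / sqrt (1 - a * sin u ^ 2) ^ 3"])
       (use has_real_derivative_sin_pow5_cos_div[OF assms] in auto)
  moreover have "((\<lambda>u. 5 * J_integrand 2 a u - 2 * (3 - 4*a) * J_integrand 3 a u - 3 * a * (1-a) * J_integrand 4 a u)
                   has_integral 5 * J 2 a - 2 * (3 - 4*a) * J 3 a - 3 * a * (1-a) * J 4 a) {0..pi/2}"
    using assms by (intro has_integral_diff has_integral_mult_right has_integral_J)
  ultimately have "0 = 5 * J 2 a - 2 * (3 - 4*a) * J 3 a - 3 * a * (1-a) * J 4 a"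
    by (rule has_integral_unique)
  then show ?thesis by linarith
qed

definition y1 :: "real \<Rightarrow> real" where "y1 a = J 0 a"
definition y1' :: "real \<Rightarrow> real" where "y1' a = -(3/2) * J 1 a"
definition y1'' :: "real \<Rightarrow> real" where "y1'' a = 3/4 * J 2 a"

definition y2 :: "real \<Rightarrow> real" where "y2 a = (1-a)^2 * J 2 (1-a)"
definition y2' :: "real \<Rightarrow> real" where
  "y2' a = -(2 * (1-a) * J 2 (1-a) + (1-a)^2 / 2 * J 3 (1-a))"
definition y2'' :: "real \<Rightarrow> real" where
  "y2'' a = 2 * J 2 (1-a) + 2 * (1-a) * J 3 (1-a) + 3/4 * (1-a)^2 * J 4 (1-a)"

lemma has_real_derivative_J_reflected:
  assumes "0 < a"
  shows "((\<lambda>a. J k (1-a)) has_real_derivative (3/2 - real k) * J (Suc k) (1-a)) (at a)"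
proof -
  have "((\<lambda>a::real. 1-a) has_real_derivative -1) (at a)" by (auto intro!: derivative_eq_intros)
  moreover have "1 - a < 1" using assms by simp
  ultimately show ?thesis
    by (intro DERIV_cong[OF DERIV_chain2[OF has_real_derivative_J]]) (auto simp: algebra_simps)
qed

lemma has_real_derivative_y1: "a < 1 \<Longrightarrow> (y1 has_real_derivative y1' a) (at a)"
  unfolding y1_def[abs_def] y1'_def using has_real_derivative_J[of a 0] by simp

lemma has_real_derivative_y1': "a < 1 \<Longrightarrow> (y1' has_real_derivative y1'' a) (at a)"
  unfolding y1'_def[abs_def] y1''_def using DERIV_cmult[OF has_real_derivative_J[of a 1], of "-(3/2)"]
  by (simp add: numeral_2_eq_2)

lemma has_real_derivative_y2: "0 < a \<Longrightarrow> (y2 has_real_derivative y2' a) (at a)"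
  unfolding y2_def[abs_def] y2'_def
  by (auto intro!: derivative_eq_intros has_real_derivative_J_reflected[of a 2, simplified]
           simp: algebra_simps)

lemma has_real_derivative_y2': "0 < a \<Longrightarrow> (y2' has_real_derivative y2'' a) (at a)"
  unfolding y2'_def[abs_def] y2''_def
  by (auto intro!: derivative_eq_intros has_real_derivative_J_reflected[of a 2, simplified]
           has_real_derivative_J_reflected[of a 3, simplified] simp: field_simps power2_eq_square)

lemma y1_hypergeometric: "a < 1 \<Longrightarrow> a * (1-a) * y1'' a + y1' a + 3/4 * y1 a = 0"
  using J_recurrence_0[of a] unfolding y1_def y1'_def y1''_def by (simp add: field_simps)

lemma y2_hypergeometric:
  assumes "0 < a"
  shows "a * (1-a) * y2'' a + y2' a + 3/4 * y2 a = 0"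
proof -
  have "a * (1-a) * y2'' a + y2' a + 3/4 * y2 a
      = (1-a)^2 / 4 * (3 * (1-a) * (1 - (1-a)) * J 4 (1-a) + 2 * (3 - 4 * (1-a)) * J 3 (1-a)
                       - 5 * J 2 (1-a))"
    unfolding y2_def y2'_def y2''_def by (simp add: field_simps power2_eq_square)
  then show ?thesis using J_recurrence_2[of "1-a"] assms by simp
qed

definition wronskian :: "real \<Rightarrow> real" where
  "wronskian a = y1 a * y2' a - y1' a * y2 a"

lemma wronskian_abel: "\<exists>C. \<forall>a\<in>{0<..<1}. a / (1-a) * wronskian a = C"
  unfolding wronskian_def
  by (rule hypergeometric_wronskian_const[where c = "3/4" and f'' = y1'' and g'' = y2''])
     (use has_real_derivative_y1 has_real_derivative_y1' has_real_derivative_y2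
        has_real_derivative_y2' y1_hypergeometric y2_hypergeometric in simp_all)

lemma integral_cos_pow4_pos: "0 < integral {0..pi/2} (\<lambda>u. cos u ^ 4)"
proof -
  have "integral {0..pi/2} (\<lambda>u. 0::real) < integral {0..pi/2} (\<lambda>u. cos u ^ 4)"
  proof (rule integral_less_real)
    fix u assume "u \<in> {0<..<pi/2}"
    then have "0 < cos u" by (intro cos_gt_zero_pi) auto
    then show "0 < cos u ^ 4" by simp
  qed (use pi_gt_zero in \<open>auto intro!: continuous_intros simp: not_le\<close>)
  then show ?thesis by simp
qed

lemma integral_cos_pow4_le_y1:
  assumes "0 \<le> a" "a < 1"
  shows "integral {0..pi/2} (\<lambda>u. cos u ^ 4) \<le> y1 a"
  unfolding y1_def J_def
proof (rule integral_le)
  fix u :: real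
  define w where "w = 1 - a * sin u ^ 2"
  have "0 < w" unfolding w_def using assms(2) by (rule one_minus_mult_sin_sq_pos)
  moreover have "w \<le> 1" unfolding w_def using assms(1) by simp
  moreover have "cos u ^ 2 \<le> w"
    unfolding w_def cos_squared_eq using assms mult_left_le_one_le[of "sin u ^ 2" a] by simp
  ultimately have "cos u ^ 4 \<le> w powr 2"
    using power_mono[of "cos u ^ 2" w 2] by (simp add: powr_realpow)
  also have "\<dots> \<le> w powr (3/2)" using \<open>0 < w\<close> \<open>w \<le> 1\<close> by (intro powr_mono') auto
  finally show "cos u ^ 4 \<le> J_integrand 0 a u" unfolding J_integrand_def w_def by simp
qed (use assms continuous_on_J_integrand in \<open>auto intro!: integrable_continuous_interval continuous_intros\<close>)

lemma J2_le_pi: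
  assumes "0 \<le> b" "b \<le> 1/2"
  shows "J 2 b \<le> pi"
proof -
  have "J 2 b \<le> integral {0..pi/2} (\<lambda>u. 2::real)"
    unfolding J_def
  proof (rule integral_le)
    fix u :: real
    define w where "w = 1 - b * sin u ^ 2"
    have "b * sin u ^ 2 \<le> 1/2"
      using assms sin_sq_le_one[of u] mult_mono[of b "1/2" "sin u ^ 2" 1] by simp
    then have "1/2 \<le> w" unfolding w_def by simp
    moreover have "w \<le> 1" unfolding w_def using assms by simp
    ultimately have "w powr -(1/2) \<le> w powr -1" by (intro powr_mono') auto
    also have "\<dots> \<le> 2" using \<open>1/2 \<le> w\<close> by (simp add: powr_minus field_simps)
    finally have "w powr (3/2 - real 2) \<le> 2" by simp
    moreover have "(sin u ^ 2) ^ 2 \<le> 1" by (rule power_le_one) (simp_all add: sin_sq_le_one)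
    then have "sin u ^ (2*2) \<le> 1" by (simp only: power_mult)
    ultimately show "J_integrand 2 b u \<le> 2"
      unfolding J_integrand_def w_def[symmetric]
      using mult_mono[of "sin u ^ (2*2)" 1 "w powr (3/2 - real 2)" 2] by simp
  qed (use assms has_integral_integrable[OF has_integral_J[of b 2]] in auto)
  then show ?thesis by simp
qed

text \<open>Otherwise \<open>y\<^sub>2/y\<^sub>1\<close> would be a positive constant, but
  \<open>y\<^sub>2 (1-b) = b\<^sup>2 J 2 b \<rightarrow> 0\<close> while \<open>y\<^sub>1\<close> stays above \<open>\<integral>cos\<^sup>4\<close>.\<close>
lemma wronskian_not_identically_zero: "\<exists>a\<in>{0<..<1}. wronskian a \<noteq> 0"
proof (rule ccontr)
  assume "\<not> ?thesis"
  then have W0: "wronskian a = 0" if "a \<in> {0<..<1}" for a using that by blast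
  have "\<exists>r. \<forall>a\<in>{0<..<1}. y2 a / y1 a = r"
  proof (rule has_field_derivative_zero_constant)
    fix a :: real assume a: "a \<in> {0<..<1}"
    have "y1 a \<noteq> 0" using a J_pos[of a 0] by (simp add: y1_def)
    from DERIV_divide[OF has_real_derivative_y2 has_real_derivative_y1 this] a W0[OF a]
    show "((\<lambda>a. y2 a / y1 a) has_field_derivative 0) (at a within {0<..<1})"
      by (auto simp: wronskian_def mult.commute intro: has_field_derivative_at_within)
  qed simp
  then obtain r where r: "\<And>a. a \<in> {0<..<1} \<Longrightarrow> y2 a = r * y1 a"
    using J_pos unfolding y1_def by (metis divide_eq_eq less_irrefl greaterThanLessThan_iff)
  define L where "L = integral {0..pi/2} (\<lambda>u. cos u ^ 4)"
  have "0 < L" unfolding L_def by (rule integral_cos_pow4_pos)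
  have "r * J 0 (1/2) = (1/2)^2 * J 2 (1/2)" using r[of "1/2"] by (simp add: y1_def y2_def)
  then have "0 < r * J 0 (1/2)" using J_pos[of "1/2" 2] by simp
  then have "0 < r" using J_pos[of "1/2" 0] by (simp add: zero_less_mult_iff)
  define b where "b = min (1/2) (r * L / 8)"
  have b: "0 < b" "b \<le> 1/2" "b \<le> r * L / 8" unfolding b_def using \<open>0 < r\<close> \<open>0 < L\<close> by auto
  have "r * L \<le> r * y1 (1-b)"
    using integral_cos_pow4_le_y1[of "1-b"] b \<open>0 < r\<close> unfolding L_def by simp
  also have "\<dots> = b^2 * J 2 b" using r[of "1-b"] b by (simp add: y2_def)
  also have "\<dots> \<le> b^2 * 4" using J2_le_pi[of b] b pi_less_4 by (intro mult_left_mono) auto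
  also have "\<dots> \<le> 2 * b" using b by (simp add: power2_eq_square)
  finally show False using b \<open>0 < r\<close> \<open>0 < L\<close> by (simp add: field_simps)
qed

lemma at_within_atLeast_one: "1 < (x::real) \<Longrightarrow> at x within {1..} = at x"
  by (rule at_within_interior) simp

lemma dR_eqI:
  assumes "1 < x" and "(f has_real_derivative D) (at x)"
  shows "dR f x = D"
  unfolding dR_def at_within_atLeast_one[OF assms(1)] using assms(2) DERIV_unique by blast

lemma psi1_eq_y1: "x \<noteq> 0 \<Longrightarrow> psi1 x = 3/2 * y1 (1 / x^2)"
  unfolding psi1_def y1_def J_def J_integrand_def by simp

lemma psi2_eq_y2:
  assumes "x \<noteq> 0"
  shows "psi2 x = 3/2 * y2 (1 / x^2)"
proof -
  have "J_integrand 2 (1 - 1/x^2) = (\<lambda>v. sin v ^ 4 / sqrt (1 - (1 - 1/x^2) * sin v ^ 2))"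
  proof
    fix v :: real
    define w where "w = 1 - (1 - 1/x^2) * sin v ^ 2"
    have "0 < w" unfolding w_def using assms by (intro one_minus_mult_sin_sq_pos) simp
    then have "w powr (3/2 - real 2) = 1 / sqrt w"
      by (simp add: powr_minus_divide powr_half_sqrt flip: powr_minus)
    then show "J_integrand 2 (1 - 1/x^2) v = sin v ^ 4 / sqrt w"
      unfolding J_integrand_def w_def[symmetric] by simp
  qed
  then show ?thesis unfolding psi2_def y2_def J_def by simp
qed

lemma has_real_derivative_inverse_square:
  "x \<noteq> 0 \<Longrightarrow> ((\<lambda>x. 1 / x^2) has_real_derivative -2 / x^3) (at x)"
  by (auto intro!: derivative_eq_intros simp: field_simps power2_eq_square power3_eq_cube)

lemma inverse_square_in_unit_interval: "1 < x \<Longrightarrow> 1 / x^2 \<in> {0<..<(1::real)}"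
  using one_less_power[of x 2] by (auto simp: divide_less_eq)

lemma has_real_derivative_psi1:
  assumes "1 < x"
  shows "(psi1 has_real_derivative 3/2 * (y1' (1 / x^2) * (-2 / x^3))) (at x)"
proof -
  have "((\<lambda>x. 3/2 * y1 (1 / x^2)) has_real_derivative 3/2 * (y1' (1 / x^2) * (-2 / x^3))) (at x)"
    using inverse_square_in_unit_interval[OF assms] assms
    by (intro DERIV_cmult DERIV_chain2[OF has_real_derivative_y1 has_real_derivative_inverse_square]) auto
  then show ?thesis
    by (rule has_field_derivative_transform_within_open[where S = "{0<..}"])
       (use assms psi1_eq_y1 in auto)
qed

lemma has_real_derivative_psi2:
  assumes "1 < x"
  shows "(psi2 has_real_derivative 3/2 * (y2' (1 / x^2) * (-2 / x^3))) (at x)"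
proof -
  have "((\<lambda>x. 3/2 * y2 (1 / x^2)) has_real_derivative 3/2 * (y2' (1 / x^2) * (-2 / x^3))) (at x)"
    using inverse_square_in_unit_interval[OF assms] assms
    by (intro DERIV_cmult DERIV_chain2[OF has_real_derivative_y2 has_real_derivative_inverse_square]) auto
  then show ?thesis
    by (rule has_field_derivative_transform_within_open[where S = "{0<..}"])
       (use assms psi2_eq_y2 in auto)
qed

lemma omega_eq_wronskian:
  assumes "1 < x"
  shows "omega x = -(9/2) / x^3 * wronskian (1 / x^2)"
proof -
  have "x \<noteq> 0" using assms by simp
  then show ?thesis
    unfolding omega_def dR_eqI[OF assms has_real_derivative_psi1[OF assms]]
      dR_eqI[OF assms has_real_derivative_psi2[OF assms]] psi1_eq_y1[OF \<open>x \<noteq> 0\<close>]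
      psi2_eq_y2[OF \<open>x \<noteq> 0\<close>] wronskian_def
    by (simp add: field_simps)
qed

lemma omega_closed_form: "\<exists>K. K \<noteq> 0 \<and> (\<forall>x>1. omega x = K * ((x^2 - 1) / x^3))"
proof -
  obtain C where C: "\<And>a. a \<in> {0<..<1} \<Longrightarrow> a / (1-a) * wronskian a = C"
    using wronskian_abel by blast
  have "C \<noteq> 0"
    using wronskian_not_identically_zero C by fastforce
  moreover have "omega x = -(9/2) * C * ((x^2 - 1) / x^3)" if x: "1 < x" for x
  proof -
    have "x^2 - 1 \<noteq> 0" using one_less_power[OF x, of 2] by simp
    moreover have "1 / x^2 / (1 - 1 / x^2) = 1 / (x^2 - 1)"
      using x by (simp add: field_simps)
    ultimately have "wronskian (1 / x^2) = C * (x^2 - 1)"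
      using C[OF inverse_square_in_unit_interval[OF x]] by (simp add: field_simps)
    then show ?thesis using omega_eq_wronskian[OF x] by simp
  qed
  ultimately show ?thesis by (intro exI[of _ "-(9/2) * C"]) simp
qed

theorem mainTheorem10:
  fixes tau :: real
  assumes "1 < tau" and "tau < 2"
    and "(omega has_real_derivative 0) (at tau within {1..})"
    and "\<forall>x. 1 \<le> x \<and> x < tau \<longrightarrow> \<not> (omega has_real_derivative 0) (at x within {1..})"
  shows "tau > 1.732"
proof -
  obtain K where "K \<noteq> 0" and K: "\<And>x. 1 < x \<Longrightarrow> omega x = K * ((x^2 - 1) / x^3)"
    using omega_closed_form by blast
  have "((\<lambda>x. K * ((x^2 - 1) / x^3)) has_real_derivative K * ((3 - tau^2) / tau^4)) (at tau)"
    using assms(1) by (auto intro!: derivative_eq_intros simp: field_simps power_eq_if)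
  then have "(omega has_real_derivative K * ((3 - tau^2) / tau^4)) (at tau)"
    by (rule has_field_derivative_transform_within_open[where S = "{1<..}"]) (use assms(1) K in auto)
  moreover have "(omega has_real_derivative 0) (at tau)"
    using assms(3) at_within_atLeast_one[OF assms(1)] by simp
  ultimately have "K * ((3 - tau^2) / tau^4) = 0" by (rule DERIV_unique)
  then have "sqrt 3 = tau" using \<open>K \<noteq> 0\<close> assms(1) by (intro real_sqrt_unique) auto
  moreover have "1.732 < sqrt (3::real)" by (rule real_less_rsqrt) (simp add: power2_eq_square)
  ultimately show ?thesis by simp
qed

end
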